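(* Let $\Gamma$ be a strictly positive definite, irreducible $n\times n$ covariance matrix such that $\Gamma^{-1}$ is an $M$-matrix, and for $t>0$ let $Q(t)=[I+(t\Gamma)^{-1}]^{-1}=I-(I+t\Gamma)^{-1}$. Then for all $t$ sufficiently large, every entry of $Q(t)$ is strictly positive.
   Context: A non-singular matrix $A$ is an $M$-matrix if all entries of $A^{-1}$ are non-negative and $A_{i,j}\le 0$ for all $i\ne j$. A symmetric matrix is irreducible if it cannot be written as a direct sum of square matrices. *)

theory Defs
  imports "HOL-Analysis.Analysis"
begin

definition pos_def_matrix :: "real^'n^'n \<Rightarrow> bool" where
  "pos_def_matrix A \<longleftrightarrow> transpose A = A \<and> (\<forall>x. x \<noteq> 0 \<longrightarrow> x \<bullet> (A *v x) > 0)"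

definition M_matrix :: "real^'n^'n \<Rightarrow> bool" where
  "M_matrix A \<longleftrightarrow> invertible A \<and> (\<forall>i j. matrix_inv A $ i $ j \<ge> 0)
     \<and> (\<forall>i j. i \<noteq> j \<longrightarrow> A $ i $ j \<le> 0)"

text \<open>A symmetric matrix is irreducible iff it cannot be written (after simultaneous
  permutation of rows and columns) as a direct sum of square matrices, i.e. there is no
  nonempty proper index set S with A i j = 0 whenever i in S and j not in S.\<close>
definition irreducible_matrix :: "real^'n^'n \<Rightarrow> bool" where
  "irreducible_matrix A \<longleftrightarrow>
     \<not> (\<exists>S. S \<noteq> {} \<and> S \<noteq> UNIV \<and> (\<forall>i\<in>S. \<forall>j. j \<notin> S \<longrightarrow> A $ i $ j = 0))"

definition Q_mat :: "real^'n^'n \<Rightarrow> real \<Rightarrow> real^'n^'n" where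
  "Q_mat \<Gamma> t = matrix_inv (mat 1 + matrix_inv (t *\<^sub>R \<Gamma>))"

end

theory Submission
  imports Defs
begin

text \<open>Write \<open>M = \<Gamma>\<^sup>-\<^sup>1\<close>, so that \<open>Q(t) = (I + s M)\<^sup>-\<^sup>1\<close> with \<open>s = 1/t\<close>; in fact
  positivity holds for every \<open>t > 0\<close>. The matrix \<open>A = I + s M\<close> has non-positive off-diagonal
  entries, and \<open>w = \<Gamma> 1\<close> is a positive vector with \<open>M w = 1\<close>, hence \<open>A w > 0\<close>. A minimum
  principle for \<open>x/w\<close> shows that \<open>A x \<ge> 0\<close> forces \<open>x \<ge> 0\<close>, so \<open>A\<close> is invertible with
  non-negative inverse. If a column \<open>q\<close> of \<open>A\<^sup>-\<^sup>1\<close> had a zero entry, the equation \<open>A q = e\<^sub>j\<close>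
  would force \<open>A\<close> to vanish on all entries from the zero set of \<open>q\<close> to its complement,
  contradicting irreducibility, which passes from \<open>\<Gamma>\<close> to \<open>M\<close> by symmetry.\<close>

lemma matrix_inv_eqI:
  fixes A B :: "'a::field^'n^'n"
  assumes "A ** B = mat 1"
  shows "matrix_inv A = B"
proof -
  have BA: "B ** A = mat 1"
    using assms matrix_left_right_inverse by blast
  have "A ** matrix_inv A = mat 1 \<and> matrix_inv A ** A = mat 1"
    unfolding matrix_inv_def by (rule someI[of _ B]) (use assms BA in auto)
  then have "A ** matrix_inv A = mat 1" ..
  have "matrix_inv A = (B ** A) ** matrix_inv A"
    using BA by simp
  also have "\<dots> = B"
    using \<open>A ** matrix_inv A = mat 1\<close> by (simp flip: matrix_mul_assoc)
  finally show ?thesis .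
qed

lemma matrix_inv_right:
  fixes A :: "'a::field^'n^'n"
  assumes "invertible A"
  shows "A ** matrix_inv A = mat 1"
  using assms matrix_inv_eqI invertible_right_inverse by metis

lemma matrix_inv_left:
  fixes A :: "'a::field^'n^'n"
  assumes "invertible A"
  shows "matrix_inv A ** A = mat 1"
  using matrix_inv_right[OF assms] matrix_left_right_inverse by blast

lemma invertible_matrix_inv:
  fixes A :: "'a::field^'n^'n"
  assumes "invertible A"
  shows "invertible (matrix_inv A)"
  using assms invertible_right_inverse matrix_inv_left by blast

lemma matrix_inv_matrix_inv:
  fixes A :: "'a::field^'n^'n"
  assumes "invertible A"
  shows "matrix_inv (matrix_inv A) = A"
  by (rule matrix_inv_eqI) (rule matrix_inv_left[OF assms])

lemma matrix_inv_transpose: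
  fixes A :: "'a::field^'n^'n"
  assumes "invertible A"
  shows "matrix_inv (transpose A) = transpose (matrix_inv A)"
  by (rule matrix_inv_eqI)
     (simp add: matrix_inv_left[OF assms] flip: matrix_transpose_mul)

lemma matrix_inv_scaleR:
  fixes A :: "real^'n^'n"
  assumes "invertible A" and "c \<noteq> 0"
  shows "matrix_inv (c *\<^sub>R A) = inverse c *\<^sub>R matrix_inv A"
  by (rule matrix_inv_eqI) (simp add: assms matrix_scalar_ac matrix_inv_right)

lemma matrix_inv_block_diagonal:
  fixes M :: "'a::field^'n^'n"
  assumes "invertible M"
    and block: "\<And>a b. (a \<in> S) \<noteq> (b \<in> S) \<Longrightarrow> M$a$b = 0"
    and "a \<in> S" and "b \<notin> S"
  shows "matrix_inv M $ a $ b = 0"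
proof -
  define G where "G = (\<chi> a b. if (a \<in> S) = (b \<in> S) then matrix_inv M $ a $ b else 0)"
  have term_eq: "M$a$k * G$k$b = (if (a \<in> S) = (b \<in> S) then M$a$k * matrix_inv M $ k $ b else 0)"
    for a b k
    using block[of a k] by (auto simp: G_def)
  have "(M ** G)$a$b = (if (a \<in> S) = (b \<in> S) then (M ** matrix_inv M)$a$b else 0)" for a b
    by (cases "(a \<in> S) = (b \<in> S)") (simp_all add: matrix_matrix_mult_def term_eq)
  then have "(M ** G)$a$b = (mat 1 :: 'a^'n^'n)$a$b" for a b
    using matrix_inv_right[OF \<open>invertible M\<close>] by (auto simp: mat_def)
  then have "matrix_inv M = G"
    by (intro matrix_inv_eqI) (simp add: vec_eq_iff)
  then have "matrix_inv M $ a $ b = G $ a $ b"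
    by simp
  also have "\<dots> = 0"
    using \<open>a \<in> S\<close> \<open>b \<notin> S\<close> by (simp add: G_def)
  finally show ?thesis .
qed

lemma irreducible_matrix_of_inverse:
  fixes M :: "real^'n^'n"
  assumes "invertible M" and "transpose M = M" and "irreducible_matrix (matrix_inv M)"
  shows "irreducible_matrix M"
  unfolding irreducible_matrix_def
proof
  assume "\<exists>S. S \<noteq> {} \<and> S \<noteq> UNIV \<and> (\<forall>i\<in>S. \<forall>j. j \<notin> S \<longrightarrow> M$i$j = 0)"
  then obtain S where S: "S \<noteq> {}" "S \<noteq> UNIV" and split: "\<And>i j. i \<in> S \<Longrightarrow> j \<notin> S \<Longrightarrow> M$i$j = 0"
    by blast
  have symmetric: "M$j$i = M$i$j" for i j
    by (subst (2) \<open>transpose M = M\<close>[symmetric]) (simp add: transpose_def)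
  then have "(i \<in> S) \<noteq> (j \<in> S) \<Longrightarrow> M$i$j = 0" for i j
    using split by metis
  then have "\<forall>i\<in>S. \<forall>j. j \<notin> S \<longrightarrow> matrix_inv M $ i $ j = 0"
    using matrix_inv_block_diagonal[OF \<open>invertible M\<close>] by blast
  with S show False
    using \<open>irreducible_matrix (matrix_inv M)\<close> unfolding irreducible_matrix_def by blast
qed

lemma Z_matrix_monotone:
  fixes A :: "real^'n^'n"
  assumes off: "\<And>i j. i \<noteq> j \<Longrightarrow> A$i$j \<le> 0"
    and w: "\<And>i. w$i > 0" and Aw: "\<And>i. (A *v w)$i > 0"
    and Ax: "\<And>i. (A *v x)$i \<ge> 0"
  shows "x$k \<ge> 0"
proof (rule ccontr)
  assume "\<not> x$k \<ge> 0"
  define r where "r l = x$l / w$l" for l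
  have x_eq: "x$l = w$l * r l" for l
    using w[of l] by (simp add: r_def)
  obtain i where i_min: "\<And>l. r i \<le> r l"
    using ex_is_arg_min_if_finite[of UNIV r] by (auto simp: is_arg_min_linorder)
  have "r k < 0"
    using \<open>\<not> x$k \<ge> 0\<close> w[of k] by (simp add: r_def divide_less_0_iff)
  then have "r i < 0"
    using i_min[of k] by linarith
  have "(A *v x)$i = (\<Sum>l\<in>UNIV. r i * (A$i$l * w$l) + A$i$l * w$l * (r l - r i))"
    by (simp add: matrix_vector_mult_def x_eq algebra_simps)
  also have "\<dots> = r i * (A *v w)$i + (\<Sum>l\<in>UNIV. A$i$l * w$l * (r l - r i))"
    by (simp add: matrix_vector_mult_def sum.distrib sum_distrib_left)
  also have "\<dots> \<le> r i * (A *v w)$i"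
  proof -
    have "A$i$l * w$l * (r l - r i) \<le> 0" for l
      using off[of i l] w[of l] i_min[of l]
      by (cases "l = i") (simp_all add: mult_nonpos_nonneg)
    then show ?thesis by (simp add: sum_nonpos)
  qed
  also have "\<dots> < 0"
    using \<open>r i < 0\<close> Aw[of i] by (simp add: mult_neg_pos)
  finally show False using Ax[of i] by simp
qed

lemma Z_matrix_zero_entry:
  fixes A :: "real^'n^'n"
  assumes off: "\<And>i j. i \<noteq> j \<Longrightarrow> A$i$j \<le> 0"
    and x: "\<And>k. x$k \<ge> 0" and "x$i = 0" and "(A *v x)$i \<ge> 0"
  shows "(A *v x)$i = 0" and "\<And>k. x$k > 0 \<Longrightarrow> A$i$k = 0"
proof -
  have term_nonpos: "A$i$l * x$l \<le> 0" for l
    using off[of i l] x[of l] \<open>x$i = 0\<close> by (cases "l = i") (simp_all add: mult_nonpos_nonneg)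
  then have "(A *v x)$i \<le> 0"
    by (simp add: matrix_vector_mult_def sum_nonpos)
  then show Ax_zero: "(A *v x)$i = 0"
    using \<open>(A *v x)$i \<ge> 0\<close> by linarith
  have "(\<Sum>l\<in>UNIV. - (A$i$l * x$l)) = 0"
    using Ax_zero by (simp add: matrix_vector_mult_def sum_negf)
  then have "A$i$l * x$l = 0" for l
    using term_nonpos by (simp add: sum_nonneg_eq_0_iff)
  then show "A$i$k = 0" if "x$k > 0" for k
    using that by (metis less_irrefl mult_eq_0_iff)
qed

lemma Z_matrix_invertible:
  fixes A :: "real^'n^'n"
  assumes off: "\<And>i j. i \<noteq> j \<Longrightarrow> A$i$j \<le> 0"
    and w: "\<And>i. w$i > 0" and Aw: "\<And>i. (A *v w)$i > 0"
  shows "invertible A"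
proof -
  have "x = 0" if Ax: "A *v x = 0" for x
  proof -
    have A_neg: "A *v (- x) = 0"
      using Ax by (simp add: vec_eq_iff matrix_vector_mult_def sum_negf)
    have "(- x)$k \<ge> 0" for k
      by (rule Z_matrix_monotone[of A w]) (simp_all add: off w Aw A_neg)
    moreover have "x$k \<ge> 0" for k
      by (rule Z_matrix_monotone[of A w]) (simp_all add: off w Aw Ax)
    ultimately show "x = 0"
      by (simp add: vec_eq_iff order_antisym)
  qed
  then show ?thesis
    using matrix_left_invertible_ker invertible_left_inverse by blast
qed

lemma Z_matrix_inverse_pos:
  fixes A :: "real^'n^'n"
  assumes off: "\<And>i j. i \<noteq> j \<Longrightarrow> A$i$j \<le> 0"
    and w: "\<And>i. w$i > 0" and Aw: "\<And>i. (A *v w)$i > 0"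
    and irred: "irreducible_matrix A"
  shows "matrix_inv A $ i $ j > 0"
proof -
  define q where "q = matrix_inv A *v axis j 1"
  have Aq: "A *v q = axis j 1"
    using Z_matrix_invertible[OF off w Aw]
    by (simp add: q_def matrix_vector_mul_assoc matrix_inv_right)
  have q_nonneg: "q$k \<ge> 0" for k
    by (rule Z_matrix_monotone[of A w]) (simp_all add: off w Aw Aq axis_def)
  define Z where "Z = {k. q$k = 0}"
  have Aq_zero: "(A *v q)$a = 0" if "a \<in> Z" for a
    using Z_matrix_zero_entry(1)[of A q a] off q_nonneg that by (simp add: Z_def Aq axis_def)
  have "\<forall>a\<in>Z. \<forall>b. b \<notin> Z \<longrightarrow> A$a$b = 0"
    using Z_matrix_zero_entry(2)[of A q] off q_nonneg Aq_zero
    by (metis (mono_tags) Z_def mem_Collect_eq order_le_less)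
  moreover have "j \<notin> Z"
    using Aq_zero[of j] by (auto simp: Aq)
  ultimately have "Z = {}"
    using irred unfolding irreducible_matrix_def by blast
  then have "q$i > 0"
    using q_nonneg[of i] by (auto simp: Z_def order_le_less)
  then show ?thesis
    by (simp add: q_def matrix_vector_mult_basis column_def)
qed

lemma irreducible_matrix_shift:
  fixes M :: "real^'n^'n"
  assumes "irreducible_matrix M" and "s \<noteq> 0"
  shows "irreducible_matrix (mat 1 + s *\<^sub>R M)"
proof -
  have "(mat 1 + s *\<^sub>R M)$i$j = 0 \<longleftrightarrow> M$i$j = 0" if "i \<noteq> j" for i j
    using that \<open>s \<noteq> 0\<close> by (simp add: mat_def)
  then show ?thesis
    using assms(1) unfolding irreducible_matrix_def by metis
qed

lemma shifted_Z_matrix_inverse_pos: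
  fixes M :: "real^'n^'n"
  assumes off: "\<And>i j. i \<noteq> j \<Longrightarrow> M$i$j \<le> 0"
    and w: "\<And>i. w$i > 0" and Mw: "\<And>i. (M *v w)$i \<ge> 0"
    and irred: "irreducible_matrix M" and "s > 0"
  shows "matrix_inv (mat 1 + s *\<^sub>R M) $ i $ j > 0"
proof (rule Z_matrix_inverse_pos[of _ w])
  show "(mat 1 + s *\<^sub>R M)$a$b \<le> 0" if "a \<noteq> b" for a b
    using that off[OF that] \<open>s > 0\<close> by (simp add: mat_def mult_nonneg_nonpos)
  show "((mat 1 + s *\<^sub>R M) *v w)$a > 0" for a
    using w[of a] Mw[of a] \<open>s > 0\<close>
    by (simp add: matrix_vector_mult_add_rdistrib add_pos_nonneg flip: scaleR_matrix_vector_assoc)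
  show "irreducible_matrix (mat 1 + s *\<^sub>R M)"
    using irred \<open>s > 0\<close> by (simp add: irreducible_matrix_shift)
qed (use w in auto)

lemma pos_def_matrix_invertible:
  fixes A :: "real^'n^'n"
  assumes "pos_def_matrix A"
  shows "invertible A"
proof -
  have "x = 0" if "A *v x = 0" for x
    using assms that unfolding pos_def_matrix_def by force
  then show ?thesis
    using matrix_left_invertible_ker invertible_left_inverse by blast
qed

lemma pos_def_matrix_diag_pos:
  fixes A :: "real^'n^'n"
  assumes "pos_def_matrix A"
  shows "A$i$i > 0"
proof -
  have "axis i 1 \<bullet> (A *v axis i 1) > 0"
    using assms unfolding pos_def_matrix_def by (simp add: axis_eq_0_iff)
  then show ?thesis
    by (simp add: inner_axis' matrix_vector_mult_basis column_def)
qed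

lemma pos_def_nonneg_matrix_row_sums_pos:
  fixes A :: "real^'n^'n"
  assumes "pos_def_matrix A" and "\<And>i j. A$i$j \<ge> 0"
  shows "(A *v 1)$i > 0"
proof -
  have "A$i$i \<le> (\<Sum>j\<in>UNIV. A$i$j)"
    by (rule member_le_sum) (simp_all add: assms(2))
  then show ?thesis
    using pos_def_matrix_diag_pos[OF assms(1), of i] by (simp add: matrix_vector_mult_def)
qed

theorem lemma1p7:
  fixes \<Gamma> :: "real^'n^'n"
  assumes "pos_def_matrix \<Gamma>"
    and "irreducible_matrix \<Gamma>"
    and "M_matrix (matrix_inv \<Gamma>)"
  shows "\<exists>T. \<forall>t>T. \<forall>i j. Q_mat \<Gamma> t $ i $ j > 0"
proof -
  have inv: "invertible \<Gamma>"
    using assms(1) by (rule pos_def_matrix_invertible)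
  define M where "M = matrix_inv \<Gamma>"
  have M_inv: "matrix_inv M = \<Gamma>"
    unfolding M_def using inv by (rule matrix_inv_matrix_inv)
  have \<Gamma>_nonneg: "\<And>i j. \<Gamma>$i$j \<ge> 0" and M_off: "\<And>i j. i \<noteq> j \<Longrightarrow> M$i$j \<le> 0"
    using assms(3) unfolding M_matrix_def M_def[symmetric] M_inv by auto
  have "transpose M = matrix_inv (transpose \<Gamma>)"
    by (simp add: M_def matrix_inv_transpose[OF inv])
  also have "\<dots> = M"
    using assms(1) by (simp add: M_def pos_def_matrix_def)
  finally have M_irred: "irreducible_matrix M"
    using irreducible_matrix_of_inverse[of M] invertible_matrix_inv[OF inv] assms(2)
    by (simp add: M_inv flip: M_def)
  have M_row_sums: "M *v (\<Gamma> *v 1) = 1"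
    by (simp add: M_def matrix_vector_mul_assoc matrix_inv_left[OF inv])
  have "Q_mat \<Gamma> t $ i $ j > 0" if "t > 0" for t i j
  proof -
    have "Q_mat \<Gamma> t = matrix_inv (mat 1 + inverse t *\<^sub>R M)"
      using that by (simp add: Q_mat_def M_def matrix_inv_scaleR[OF inv])
    also have "\<dots> $ i $ j > 0"
    proof (rule shifted_Z_matrix_inverse_pos[of M "\<Gamma> *v 1"])
      show "(\<Gamma> *v 1)$k > 0" for k
        using assms(1) \<Gamma>_nonneg by (rule pos_def_nonneg_matrix_row_sums_pos)
    qed (simp_all add: M_off M_row_sums M_irred that)
    finally show ?thesis .
  qed
  then show ?thesis
    by blast
qed

end
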